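(* Let $(\mathfrak{g},[\cdot,\cdot],\langle\cdot,\cdot\rangle)$ be a quadratic Lie algebra with center $Z(\mathfrak{g})$. (1) If $H^2(\mathfrak{g})=\{0\}$ and $Z(\mathfrak{g})\neq\{0\}$, then $\mathfrak{g}$ admits no $k$-symplectic structure (for any $k\ge1$). (2) If $\dim Z(\mathfrak{g})=1$ and the restriction of $\langle\cdot,\cdot\rangle$ to $Z(\mathfrak{g})$ is nondegenerate, then every derivation $D$ of $\mathfrak{g}$ which is skew-symmetric with respect to $\langle\cdot,\cdot\rangle$ satisfies $D(Z(\mathfrak{g}))=0$. In particular $\mathfrak{g}$ admits no $k$-symplectic structure (for any $k\ge1$).
   Context: A quadratic Lie algebra is a finite-dimensional real Lie algebra $\mathfrak{g}$ endowed with a nondegenerate symmetric bilinear form $\langle\cdot,\cdot\rangle$ which is invariant: $\langle [u,v],w\rangle+\langle [u,w],v\rangle=0$ for all $u,v,w\in\mathfrak{g}$. $H^2(\mathfrak{g})$ denotes the second Chevalley–Eilenberg cohomology group of $\mathfrak{g}$ with trivial real coefficients. A $k$-symplectic structure on a real Lie algebra $\mathfrak{g}$ of dimension $n(k+1)$ ($n,k\ge1$) is a pair consisting of a Lie subalgebra $\mathfrak{h}\subset\mathfrak{g}$ of dimension $nk$ and a family $(\theta_1,\dots,\theta_k)$ of skew-symmetric bilinear forms on $\mathfrak{g}$ such that: (i) $\bigcap_{i=1}^k\ker\theta_i=\{0\}$, where $\ker\theta_i=\{u\in\mathfrak{g}:\theta_i(u,v)=0\ \forall v\in\mathfrak{g}\}$;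 (ii) each $\theta_i$ is a 2-cocycle: $\theta_i([u,v],w)+\theta_i([v,w],u)+\theta_i([w,u],v)=0$ for all $u,v,w$; (iii) $\theta_i(u,v)=0$ for all $u,v\in\mathfrak{h}$ and all $i$. $\mathfrak{g}$ admits a $k$-symplectic structure if such data exist (for the appropriate $n$). *)

theory Defs
  imports "HOL-Analysis.Analysis"
begin

text \<open>A finite-dimensional real Lie algebra is modelled on a type of class euclidean_space
  (every finite-dimensional real vector space is of this form); the inner product of that
  class plays no role.\<close>

definition lie_algebra :: "('a::euclidean_space \<Rightarrow> 'a \<Rightarrow> 'a) \<Rightarrow> bool" where
  "lie_algebra br \<longleftrightarrow> bilinear br \<and> (\<forall>u. br u u = 0) \<and>
     (\<forall>u v w. br u (br v w) + br v (br w u) + br w (br u v) = 0)"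

definition quadratic_lie_algebra ::
  "('a::euclidean_space \<Rightarrow> 'a \<Rightarrow> 'a) \<Rightarrow> ('a \<Rightarrow> 'a \<Rightarrow> real) \<Rightarrow> bool" where
  "quadratic_lie_algebra br B \<longleftrightarrow> lie_algebra br \<and> bilinear B \<and>
     (\<forall>u v. B u v = B v u) \<and>
     (\<forall>u. (\<forall>v. B u v = 0) \<longrightarrow> u = 0) \<and>
     (\<forall>u v w. B (br u v) w + B (br u w) v = 0)"

definition lie_center :: "('a::euclidean_space \<Rightarrow> 'a \<Rightarrow> 'a) \<Rightarrow> 'a set" where
  "lie_center br = {z. \<forall>u. br z u = 0}"

definition skew_form :: "('a::euclidean_space \<Rightarrow> 'a \<Rightarrow> real) \<Rightarrow> bool" where
  "skew_form \<theta> \<longleftrightarrow> bilinear \<theta> \<and> (\<forall>u v. \<theta> u v = - \<theta> v u)"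

definition two_cocycle ::
  "('a::euclidean_space \<Rightarrow> 'a \<Rightarrow> 'a) \<Rightarrow> ('a \<Rightarrow> 'a \<Rightarrow> real) \<Rightarrow> bool" where
  "two_cocycle br \<theta> \<longleftrightarrow> skew_form \<theta> \<and>
     (\<forall>u v w. \<theta> (br u v) w + \<theta> (br v w) u + \<theta> (br w u) v = 0)"

definition two_coboundary ::
  "('a::euclidean_space \<Rightarrow> 'a \<Rightarrow> 'a) \<Rightarrow> ('a \<Rightarrow> 'a \<Rightarrow> real) \<Rightarrow> bool" where
  "two_coboundary br \<theta> \<longleftrightarrow> (\<exists>f::'a \<Rightarrow> real. linear f \<and> (\<forall>u v. \<theta> u v = f (br u v)))"

definition H2_trivial :: "('a::euclidean_space \<Rightarrow> 'a \<Rightarrow> 'a) \<Rightarrow> bool" where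
  "H2_trivial br \<longleftrightarrow> (\<forall>\<theta>. two_cocycle br \<theta> \<longrightarrow> two_coboundary br \<theta>)"

definition lie_subalgebra :: "('a::euclidean_space \<Rightarrow> 'a \<Rightarrow> 'a) \<Rightarrow> 'a set \<Rightarrow> bool" where
  "lie_subalgebra br h \<longleftrightarrow> subspace h \<and> (\<forall>u\<in>h. \<forall>v\<in>h. br u v \<in> h)"

definition form_kernel :: "('a::euclidean_space \<Rightarrow> 'a \<Rightarrow> real) \<Rightarrow> 'a set" where
  "form_kernel \<theta> = {u. \<forall>v. \<theta> u v = 0}"

definition k_symplectic_structure ::
  "('a::euclidean_space \<Rightarrow> 'a \<Rightarrow> 'a) \<Rightarrow> nat \<Rightarrow> 'a set \<Rightarrow> (nat \<Rightarrow> 'a \<Rightarrow> 'a \<Rightarrow> real) \<Rightarrow> bool" where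
  "k_symplectic_structure br k h \<theta> \<longleftrightarrow>
     (\<exists>n::nat. n \<ge> 1 \<and> DIM('a) = n * (k + 1) \<and> dim h = n * k) \<and>
     lie_subalgebra br h \<and>
     (\<forall>i<k. two_cocycle br (\<theta> i)) \<and>
     (\<Inter>i\<in>{..<k}. form_kernel (\<theta> i)) = {0} \<and>
     (\<forall>i<k. \<forall>u\<in>h. \<forall>v\<in>h. \<theta> i u v = 0)"

definition admits_k_symplectic :: "('a::euclidean_space \<Rightarrow> 'a \<Rightarrow> 'a) \<Rightarrow> nat \<Rightarrow> bool" where
  "admits_k_symplectic br k \<longleftrightarrow> (\<exists>h \<theta>. k_symplectic_structure br k h \<theta>)"

definition lie_derivation :: "('a::euclidean_space \<Rightarrow> 'a \<Rightarrow> 'a) \<Rightarrow> ('a \<Rightarrow> 'a) \<Rightarrow> bool" where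
  "lie_derivation br D \<longleftrightarrow> linear D \<and> (\<forall>u v. D (br u v) = br (D u) v + br u (D v))"

definition skew_wrt :: "('a::euclidean_space \<Rightarrow> 'a \<Rightarrow> real) \<Rightarrow> ('a \<Rightarrow> 'a) \<Rightarrow> bool" where
  "skew_wrt B D \<longleftrightarrow> (\<forall>u v. B (D u) v + B u (D v) = 0)"

end

theory Submission
  imports Defs
begin

text \<open>A central element z lies in the kernel of every 2-coboundary, hence, when H^2 vanishes, of
  every 2-cocycle; as the common kernel of a k-symplectic family is trivial, a nonzero such z
  rules out k-symplectic structures. Without the cohomological hypothesis one uses the invariant
  form instead: for a cocycle \<theta> and central z, write \<theta>(z,-) = <y,->. The cocycle identity makes
  y orthogonal to the derived algebra, so y is central by invariance, and <y,z> = \<theta>(z,z) = 0.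
  If the centre is a line on which the form is nondegenerate, this forces y = 0. The same
  argument applied to Dz, which is central and orthogonal to z, shows that skew-symmetric
  derivations kill the centre.\<close>

lemma linear_functional_eq_inner:
  fixes \<phi> :: "'a::euclidean_space \<Rightarrow> real"
  assumes "linear \<phi>"
  shows "\<phi> v = v \<bullet> adjoint \<phi> 1"
  using adjoint_works[OF assms, of v 1] by simp

lemma nondegenerate_bilinear_represents_linear:
  fixes B :: "'a::euclidean_space \<Rightarrow> 'a \<Rightarrow> real"
  assumes bl: "bilinear B" and nd: "\<forall>u. (\<forall>v. B u v = 0) \<longrightarrow> u = 0"
    and lin: "linear \<phi>"
  shows "\<exists>y. \<forall>v. \<phi> v = B y v"
proof -
  define M where "M y = adjoint (B y) 1" for y
  have M: "B y v = v \<bullet> M y" for y v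
    unfolding M_def using bl by (intro linear_functional_eq_inner) (simp add: bilinear_def)
  have "linear M"
  proof (rule linearI)
    show "M (x + y) = M x + M y" for x y
    proof -
      have "v \<bullet> M (x + y) = v \<bullet> (M x + M y)" for v
        using bilinear_ladd[OF bl, of x y v] by (simp add: M[symmetric] inner_add_right)
      then show ?thesis using vector_eq_ldot by blast
    qed
    show "M (c *\<^sub>R x) = c *\<^sub>R M x" for c x
    proof -
      have "v \<bullet> M (c *\<^sub>R x) = v \<bullet> (c *\<^sub>R M x)" for v
        using bilinear_lmul[OF bl, of c x v] by (simp add: M[symmetric])
      then show ?thesis using vector_eq_ldot by blast
    qed
  qed
  moreover have "inj M"
  proof (rule injI)
    fix x y assume "M x = M y"
    then have "\<forall>v. B (x - y) v = 0"
      using M bilinear_lsub[OF bl] by simp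
    then show "x = y" using nd by auto
  qed
  ultimately have "surj M" by (rule linear_injective_imp_surjective) simp
  then obtain y where "M y = adjoint \<phi> 1" by (metis surjD)
  then show ?thesis using linear_functional_eq_inner[OF lin] M by metis
qed

lemma dim_eq_1_scalar_multiple:
  fixes S :: "'a::euclidean_space set"
  assumes "subspace S" "dim S = 1" "z \<in> S" "z \<noteq> 0" "y \<in> S"
  shows "\<exists>c. y = c *\<^sub>R z"
proof -
  have "span {z} = span S"
    by (rule dim_eq_span) (use assms in auto)
  then have "y \<in> span {z}" using assms span_eq_iff by blast
  then show ?thesis by (auto simp: span_singleton)
qed

lemma dim_eq_1_nondegenerate_orthogonal_eq_0:
  fixes B :: "'a::euclidean_space \<Rightarrow> 'a \<Rightarrow> real"
  assumes bl: "bilinear B" and S: "subspace S" "dim S = 1"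
    and nd: "\<forall>z\<in>S. (\<forall>w\<in>S. B z w = 0) \<longrightarrow> z = 0"
    and y: "y \<in> S" and z: "z \<in> S" "z \<noteq> 0" and orth: "B y z = 0"
  shows "y = 0"
proof -
  have multiple: "\<exists>c. w = c *\<^sub>R z" if "w \<in> S" for w
    using dim_eq_1_scalar_multiple[OF S z that] .
  obtain c where c: "y = c *\<^sub>R z" using multiple[OF y] by blast
  have "B z z \<noteq> 0"
  proof
    assume "B z z = 0"
    then have "\<forall>w\<in>S. B z w = 0"
      using multiple bilinear_rmul[OF bl] by fastforce
    with nd z show False by blast
  qed
  moreover have "c * B z z = 0" using orth c bilinear_lmul[OF bl] by simp
  ultimately show ?thesis using c by simp
qed

lemma lie_algebra_antisym:
  assumes "lie_algebra br"
  shows "br u v = - br v u"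
proof -
  have bl: "bilinear br" and alt: "\<And>u. br u u = 0"
    using assms unfolding lie_algebra_def by blast+
  have "br (u + v) (u + v) = br u u + br u v + (br v u + br v v)"
    by (simp add: bilinear_ladd[OF bl] bilinear_radd[OF bl] algebra_simps)
  then show ?thesis using alt by (simp add: eq_neg_iff_add_eq_0)
qed

lemma quadratic_lie_algebra_assoc:
  assumes "quadratic_lie_algebra br B"
  shows "B (br x y) z = B x (br y z)"
proof -
  have la: "lie_algebra br" and bl: "bilinear B" and sym: "B (br y z) x = B x (br y z)"
    and inv: "B (br y z) x + B (br y x) z = 0"
    using assms unfolding quadratic_lie_algebra_def by blast+
  have "B (br y x) z = - B (br x y) z"
    using lie_algebra_antisym[OF la, of y x] bilinear_lneg[OF bl] by simp
  with sym inv show ?thesis by linarith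
qed

lemma center_subspace:
  assumes "bilinear br"
  shows "subspace (lie_center br)"
  unfolding subspace_def lie_center_def
  using bilinear_lzero[OF assms] bilinear_ladd[OF assms] bilinear_lmul[OF assms] by auto

lemma orthogonal_to_derived_imp_center:
  assumes "quadratic_lie_algebra br B" and orth: "\<And>u v. B y (br u v) = 0"
  shows "y \<in> lie_center br"
proof -
  have nd: "\<forall>u. (\<forall>v. B u v = 0) \<longrightarrow> u = 0"
    using assms(1) unfolding quadratic_lie_algebra_def by blast
  have "B (br y u) v = 0" for u v
    using orth quadratic_lie_algebra_assoc[OF assms(1)] by simp
  then show ?thesis using nd unfolding lie_center_def by blast
qed

lemma coboundary_kernel_contains_center:
  assumes "two_coboundary br \<theta>"
  shows "lie_center br \<subseteq> form_kernel \<theta>"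
  using assms linear_0 unfolding two_coboundary_def lie_center_def form_kernel_def by fastforce

lemma two_cocycle_center_bracket:
  assumes la: "lie_algebra br" and cc: "two_cocycle br \<theta>" and z: "z \<in> lie_center br"
  shows "\<theta> z (br u v) = 0"
proof -
  have bl: "bilinear \<theta>" and skew: "\<theta> z (br u v) = - \<theta> (br u v) z"
    and cocycle: "\<theta> (br u v) z + \<theta> (br v z) u + \<theta> (br z u) v = 0"
    using cc unfolding two_cocycle_def skew_form_def by blast+
  have "br z u = 0" "br v z = 0"
    using z lie_algebra_antisym[OF la, of v z] unfolding lie_center_def by auto
  with cocycle skew show ?thesis using bilinear_lzero[OF bl] by simp
qed

lemma cocycle_kernel_contains_center:
  assumes qla: "quadratic_lie_algebra br B" and dim: "dim (lie_center br) = 1"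
    and nd: "\<forall>z\<in>lie_center br. (\<forall>w\<in>lie_center br. B z w = 0) \<longrightarrow> z = 0"
    and cc: "two_cocycle br \<theta>" and z: "z \<in> lie_center br"
  shows "z \<in> form_kernel \<theta>"
proof (cases "z = 0")
  case True
  have "bilinear \<theta>" using cc unfolding two_cocycle_def skew_form_def by blast
  with True show ?thesis using bilinear_lzero unfolding form_kernel_def by blast
next
  case False
  have la: "lie_algebra br" and br: "bilinear br" and bl: "bilinear B"
    and ndB: "\<forall>u. (\<forall>v. B u v = 0) \<longrightarrow> u = 0"
    using qla unfolding quadratic_lie_algebra_def lie_algebra_def by blast+
  have skew: "skew_form \<theta>" using cc unfolding two_cocycle_def by blast
  then have "linear (\<theta> z)" unfolding skew_form_def bilinear_def by blast
  then obtain y where y: "\<And>v. \<theta> z v = B y v"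
    using nondegenerate_bilinear_represents_linear[OF bl ndB] by blast
  have "B y (br u v) = 0" for u v
    using two_cocycle_center_bracket[OF la cc z, of u v] y[of "br u v"] by simp
  then have y_center: "y \<in> lie_center br" by (rule orthogonal_to_derived_imp_center[OF qla])
  have y_orth: "B y z = 0"
  proof -
    have "\<theta> z z = - \<theta> z z" using skew unfolding skew_form_def by blast
    then show ?thesis using y[of z] by linarith
  qed
  have "y = 0"
    by (rule dim_eq_1_nondegenerate_orthogonal_eq_0[OF bl center_subspace[OF br] dim nd
          y_center z False y_orth])
  then show ?thesis using y bilinear_lzero[OF bl] unfolding form_kernel_def by simp
qed

lemma derivation_maps_center:
  assumes D: "lie_derivation br D" and z: "z \<in> lie_center br"
  shows "D z \<in> lie_center br"
proof -
  have "br (D z) u = 0" for u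
  proof -
    have "D (br z u) = br (D z) u + br z (D u)" using D unfolding lie_derivation_def by blast
    moreover have "br z u = 0" "br z (D u) = 0" using z unfolding lie_center_def by auto
    moreover have "D 0 = 0" using D linear_0 unfolding lie_derivation_def by blast
    ultimately show ?thesis by simp
  qed
  then show ?thesis unfolding lie_center_def by blast
qed

lemma skew_derivation_vanishes_on_center:
  assumes qla: "quadratic_lie_algebra br B" and dim: "dim (lie_center br) = 1"
    and nd: "\<forall>z\<in>lie_center br. (\<forall>w\<in>lie_center br. B z w = 0) \<longrightarrow> z = 0"
    and D: "lie_derivation br D" "skew_wrt B D" and z: "z \<in> lie_center br"
  shows "D z = 0"
proof (cases "z = 0")
  case True
  then show ?thesis using D linear_0 unfolding lie_derivation_def by blast
next
  case False
  have bl: "bilinear B" and sym: "B z (D z) = B (D z) z" and br: "bilinear br"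
    using qla unfolding quadratic_lie_algebra_def lie_algebra_def by blast+
  have "B (D z) z + B z (D z) = 0" using D unfolding skew_wrt_def by blast
  with sym have "B (D z) z = 0" by linarith
  then show ?thesis
    by (rule dim_eq_1_nondegenerate_orthogonal_eq_0[OF bl center_subspace[OF br] dim nd
        derivation_maps_center[OF D(1) z] z False])
qed

lemma not_admits_k_symplectic_if_cocycles_degenerate:
  assumes "z \<noteq> 0" and "\<And>\<theta>. two_cocycle br \<theta> \<Longrightarrow> z \<in> form_kernel \<theta>"
  shows "\<not> admits_k_symplectic br k"
proof
  assume "admits_k_symplectic br k"
  then obtain h \<theta> where "k_symplectic_structure br k h \<theta>"
    unfolding admits_k_symplectic_def by blast
  then have "\<forall>i<k. two_cocycle br (\<theta> i)" and I: "(\<Inter>i\<in>{..<k}. form_kernel (\<theta> i)) = {0}"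
    unfolding k_symplectic_structure_def by blast+
  with assms(2) have "z \<in> (\<Inter>i\<in>{..<k}. form_kernel (\<theta> i))" by auto
  with I assms(1) show False by auto
qed

theorem mainTheorem2:
  fixes br :: "'a::euclidean_space \<Rightarrow> 'a \<Rightarrow> 'a" and B :: "'a \<Rightarrow> 'a \<Rightarrow> real"
  assumes "quadratic_lie_algebra br B"
  shows "(H2_trivial br \<and> lie_center br \<noteq> {0} \<longrightarrow>
            (\<forall>k\<ge>1. \<not> admits_k_symplectic br k))
       \<and> (dim (lie_center br) = 1 \<and>
          (\<forall>z\<in>lie_center br. (\<forall>w\<in>lie_center br. B z w = 0) \<longrightarrow> z = 0) \<longrightarrow>
            (\<forall>D. lie_derivation br D \<and> skew_wrt B D \<longrightarrow> (\<forall>z\<in>lie_center br. D z = 0))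
            \<and> (\<forall>k\<ge>1. \<not> admits_k_symplectic br k))"
proof (intro conjI impI allI)
  fix k :: nat
  assume H: "H2_trivial br \<and> lie_center br \<noteq> {0}"
  have "subspace (lie_center br)"
    using assms center_subspace unfolding quadratic_lie_algebra_def lie_algebra_def by blast
  then obtain z where z: "z \<in> lie_center br" "z \<noteq> 0" using H subspace_0 by blast
  have "z \<in> form_kernel \<theta>" if "two_cocycle br \<theta>" for \<theta>
    using H that z(1) coboundary_kernel_contains_center unfolding H2_trivial_def by blast
  then show "\<not> admits_k_symplectic br k"
    by (rule not_admits_k_symplectic_if_cocycles_degenerate[OF z(2)])
next
  fix D
  assume D: "lie_derivation br D \<and> skew_wrt B D"
  assume "dim (lie_center br) = 1 \<and>
    (\<forall>z\<in>lie_center br. (\<forall>w\<in>lie_center br. B z w = 0) \<longrightarrow> z = 0)"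
  then show "\<forall>z\<in>lie_center br. D z = 0"
    using skew_derivation_vanishes_on_center[OF assms] D by blast
next
  fix k :: nat
  assume H: "dim (lie_center br) = 1 \<and>
    (\<forall>z\<in>lie_center br. (\<forall>w\<in>lie_center br. B z w = 0) \<longrightarrow> z = 0)"
  then obtain z where z: "z \<in> lie_center br" "z \<noteq> 0"
    using dim_eq_0[of "lie_center br"] by auto
  have "z \<in> form_kernel \<theta>" if "two_cocycle br \<theta>" for \<theta>
    using H cocycle_kernel_contains_center[OF assms _ _ that z(1)] by blast
  then show "\<not> admits_k_symplectic br k"
    by (rule not_admits_k_symplectic_if_cocycles_degenerate[OF z(2)])
qed

end
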